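(* Let $\mathcal{Z}$ be a data space with unknown distribution $\mu$, let $S=(Z_1,\dots,Z_n)$ have i.i.d. entries $Z_i\sim\mu$, let the learning algorithm be a Markov kernel $P_{W|S}$ producing a hypothesis $W$ in a hypothesis class $\mathcal{W}$, with $P_W$ the marginal of $W$ and $P_{W,Z_i}$ the joint law of $(W,Z_i)$. Let $l:\mathcal{W}\times\mathcal{Z}\to\mathbb{R}^+$ be a loss function and assume that for every $i=1,\dots,n$, $l(W,Z_i)$ is $\sigma$-subgaussian when $(W,Z_i)$ is distributed according to $\frac{P_{W,Z_i}+P_W\otimes\mu}{2}$. If $I(W;Z_i)\ge 8(\log 2)^2$ for all $i=1,\dots,n$, then $$\frac2n\sum_{i=1}^n\sqrt{2\sigma^2 I_{JS}(W;Z_i)}\le\frac1n\sum_{i=1}^n\sqrt{2\sigma^2 I(W;Z_i)},$$ i.e. the Jensen–Shannon information upper bound $\frac2n\sum_i\sqrt{2\sigma^2 I_{JS}(W;Z_i)}$ on $|\overline{\text{gen}}(P_{W|S},\mu)|$ is no larger than the mutual information upper bound $\frac1n\sum_i\sqrt{2\sigma^2 I(W;Z_i)}$.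
   Context: A random variable $X$ is $\sigma$-subgaussian if $\mathbb{E}[e^{\lambda(X-\mathbb{E}X)}]\le e^{\lambda^2\sigma^2/2}$ for all $\lambda\in\mathbb{R}$. Expected generalization error: $\overline{\text{gen}}(P_{W|S},\mu)=\mathbb{E}_{P_{W,S}}\big[\int l(W,z)\,\mu(dz)-\frac1n\sum_{i=1}^n l(W,Z_i)\big]$. Mutual information: $I(W;Z_i)=KL(P_{W,Z_i}\|P_W\otimes P_{Z_i})$. Jensen–Shannon information: $I_{JS}(W;Z_i)=\frac12 KL\big(P_{W,Z_i}\|M_i\big)+\frac12 KL\big(P_W\otimes P_{Z_i}\|M_i\big)$ with $M_i=\frac{P_{W,Z_i}+P_W\otimes P_{Z_i}}{2}$; here $P_{Z_i}=\mu$, $KL$ is the Kullback–Leibler divergence, and $\log$ is the natural logarithm. *)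

theory Defs
  imports "HOL-Probability.Probability"
begin

text \<open>Kullback--Leibler divergence KL(P || Q) with natural logarithm, extended-real valued:
  it equals the library quantity KL_divergence (exp 1) Q P = integral of ln (dP/dQ) w.r.t. P
  when P is absolutely continuous w.r.t. Q and ln (dP/dQ) is P-integrable, and +infinity otherwise
  (for probability measures, finiteness of KL is equivalent to this integrability).\<close>
definition KLdiv :: "'a measure \<Rightarrow> 'a measure \<Rightarrow> ereal" where
  "KLdiv P Q =
     (if absolutely_continuous Q P \<and> integrable P (entropy_density (exp 1) Q P)
      then ereal (KL_divergence (exp 1) Q P) else \<infinity>)"

definition mix_half :: "'a measure \<Rightarrow> 'a measure \<Rightarrow> 'a measure" where
  "mix_half P Q = measure_of (space P) (sets P) (\<lambda>A. (emeasure P A + emeasure Q A) / 2)"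

definition JSdiv :: "'a measure \<Rightarrow> 'a measure \<Rightarrow> ereal" where
  "JSdiv P Q = (KLdiv P (mix_half P Q) + KLdiv Q (mix_half P Q)) / 2"

definition subgaussian :: "'a measure \<Rightarrow> ('a \<Rightarrow> real) \<Rightarrow> real \<Rightarrow> bool" where
  "subgaussian M X \<sigma> \<longleftrightarrow> integrable M X \<and>
     (\<forall>t::real. (\<integral>\<^sup>+x. ennreal (exp (t * (X x - (\<integral>y. X y \<partial>M)))) \<partial>M)
                  \<le> ennreal (exp (t\<^sup>2 * \<sigma>\<^sup>2 / 2)))"

definition esqrt :: "ereal \<Rightarrow> ereal" where
  "esqrt x = (if x = \<infinity> then \<infinity> else ereal (sqrt (real_of_ereal x)))"

end

theory Submission
  imports Defs "HOL-Analysis.Harmonic_Numbers"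
begin

(* A measure has density at most 2 with respect to the midpoint (P + Q)/2, so both KL terms of
   the Jensen-Shannon divergence are at most ln 2, and JS <= ln 2. The left-hand side is therefore
   at most 2 sqrt(2 sigma^2 ln 2), whereas every mutual-information term is at least
   sqrt(2 sigma^2 * 8 (ln 2)^2) = 2 sqrt(2 sigma^2 ln 2) * sqrt(2 ln 2), and 2 ln 2 >= 1. *)

lemma sets_mix_half [simp]: "sets (mix_half P Q) = sets P"
  and space_mix_half [simp]: "space (mix_half P Q) = space P"
  unfolding mix_half_def by simp_all

lemma mix_half_commute: "sets Q = sets P \<Longrightarrow> mix_half P Q = mix_half Q P"
  unfolding mix_half_def by (simp add: add.commute sets_eq_imp_space_eq[of Q P])

lemma emeasure_mix_half:
  assumes sets_eq: "sets Q = sets P" and A: "A \<in> sets P"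
  shows "emeasure (mix_half P Q) A = (emeasure P A + emeasure Q A) / 2"
  unfolding mix_half_def
proof (rule emeasure_measure_of_sigma[OF sets.sigma_algebra_axioms _ _ A])
  show "positive (sets P) (\<lambda>A. (emeasure P A + emeasure Q A) / 2)"
    unfolding positive_def by simp
  show "countably_additive (sets P) (\<lambda>A. (emeasure P A + emeasure Q A) / 2)"
    unfolding countably_additive_def
  proof (intro allI impI)
    fix F :: "nat \<Rightarrow> _" assume F: "range F \<subseteq> sets P" "disjoint_family F"
    have "(\<Sum>i. (emeasure P (F i) + emeasure Q (F i)) / 2)
        = ((\<Sum>i. emeasure P (F i)) + (\<Sum>i. emeasure Q (F i))) / 2"
      by (simp add: divide_ennreal_def ennreal_suminf_multc suminf_add)
    also have "\<dots> = (emeasure P (\<Union>i. F i) + emeasure Q (\<Union>i. F i)) / 2"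
      using F sets_eq by (simp add: suminf_emeasure)
    finally show "(\<Sum>i. (emeasure P (F i) + emeasure Q (F i)) / 2)
        = (emeasure P (\<Union>i. F i) + emeasure Q (\<Union>i. F i)) / 2" .
  qed
qed

lemma prob_space_mix_half:
  assumes "prob_space P" "prob_space Q" "sets Q = sets P"
  shows "prob_space (mix_half P Q)"
proof
  have "emeasure (mix_half P Q) (space (mix_half P Q)) = (1 + 1) / 2"
    using assms(1,2)[THEN prob_space.emeasure_space_1] sets_eq_imp_space_eq[OF assms(3)] assms(3)
    by (simp add: emeasure_mix_half)
  then show "emeasure (mix_half P Q) (space (mix_half P Q)) = 1"
    by (simp add: one_add_one ennreal_divide_self)
qed

lemma emeasure_le_2_mix_half:
  assumes "sets Q = sets P" "A \<in> sets P"
  shows "emeasure P A \<le> 2 * emeasure (mix_half P Q) A"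
proof -
  have "2 * emeasure (mix_half P Q) A = (emeasure P A + emeasure Q A) * 2 / 2"
    using assms by (simp only: emeasure_mix_half ennreal_times_divide mult.commute)
  also have "\<dots> = emeasure P A + emeasure Q A"
    by (rule mult_divide_eq_ennreal) simp_all
  finally show ?thesis by simp
qed

lemma absolutely_continuous_of_emeasure_le:
  assumes "sets N = sets M" and dom: "\<And>A. A \<in> sets M \<Longrightarrow> emeasure N A \<le> C * emeasure M A"
  shows "absolutely_continuous M N"
  unfolding absolutely_continuous_def
proof
  fix A assume "A \<in> null_sets M"
  then show "A \<in> null_sets N"
    using dom[of A] \<open>sets N = sets M\<close> by (auto simp: null_sets_def)
qed

lemma AE_RN_deriv_le_of_emeasure_le:
  assumes "finite_measure M" "sets N = sets M" "C \<noteq> \<infinity>"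
    and dom: "\<And>A. A \<in> sets M \<Longrightarrow> emeasure N A \<le> C * emeasure M A"
  shows "AE x in M. RN_deriv M N x \<le> C"
proof -
  interpret M: finite_measure M by fact
  define f where "f = RN_deriv M N"
  have f_density: "density M f = N"
    unfolding f_def
    using absolutely_continuous_of_emeasure_le[OF assms(2) dom] assms(2)
    by (rule M.density_RN_deriv)
  define A where "A = {x \<in> space M. C < f x}"
  have [measurable]: "A \<in> sets M"
    unfolding A_def f_def by measurable
  have "AE x in M. f x * indicator A x \<le> C * indicator A x"
  proof (rule ccontr)
    assume "\<not> (AE x in M. f x * indicator A x \<le> C * indicator A x)"
    then have "(\<integral>\<^sup>+x. C * indicator A x \<partial>M) < (\<integral>\<^sup>+x. f x * indicator A x \<partial>M)"
      using \<open>C \<noteq> \<infinity>\<close>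
      by (intro nn_integral_less)
        (auto simp: A_def f_def nn_integral_cmult_indicator ennreal_mult_eq_top_iff
          split: split_indicator intro!: AE_I2)
    also have "\<dots> = emeasure (density M f) A"
      by (simp add: emeasure_density f_def)
    also have "\<dots> = emeasure N A"
      by (simp add: f_density)
    finally show False
      using dom[of A] by (simp add: nn_integral_cmult_indicator)
  qed
  with AE_space show ?thesis
  proof eventually_elim
    case (elim x)
    then show ?case
      by (cases "x \<in> A") (auto simp: A_def f_def not_less)
  qed
qed

lemma abs_mult_ln_le:
  fixes t C :: real
  assumes "0 \<le> t" "t \<le> C"
  shows "\<bar>t * ln t\<bar> \<le> C\<^sup>2 + 1"
proof (cases "t = 0")
  case False
  with assms have "0 < t" by simp
  have "t * ln t \<le> t * (t - 1)"
    using \<open>0 < t\<close> ln_le_minus_one by (simp add: mult_left_mono)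
  also have "\<dots> \<le> C\<^sup>2"
    using assms mult_mono[OF assms(2) assms(2)] by (simp add: power2_eq_square algebra_simps)
  finally have upper: "t * ln t \<le> C\<^sup>2" .
  have "- ln t \<le> 1 / t - 1"
    using ln_le_minus_one[of "1 / t"] \<open>0 < t\<close> by (simp add: ln_div)
  then have "t * - ln t \<le> t * (1 / t - 1)"
    using \<open>0 < t\<close> by (intro mult_left_mono) auto
  also have "\<dots> \<le> 1"
    using \<open>0 < t\<close> by (simp add: field_simps)
  finally show ?thesis
    unfolding abs_le_iff using upper zero_le_power2[of C] by linarith
qed simp

lemma KLdiv_le_ln_of_emeasure_le:
  assumes "prob_space M" "prob_space P" and sets_eq: "sets P = sets M"
    and dom: "\<And>A. A \<in> sets M \<Longrightarrow> emeasure P A \<le> ennreal C * emeasure M A"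
  shows "KLdiv P M \<le> ereal (ln C)"
proof -
  interpret M: prob_space M by fact
  interpret P: prob_space P by fact
  have "1 \<le> C"
    using dom[OF sets.top] sets_eq_imp_space_eq[OF sets_eq] P.emeasure_space_1
      M.emeasure_space_1 by simp
  have ac: "absolutely_continuous M P"
    using sets_eq dom by (rule absolutely_continuous_of_emeasure_le)
  have RN_le: "AE x in M. RN_deriv M P x \<le> ennreal C"
    using M.finite_measure_axioms sets_eq _ dom by (rule AE_RN_deriv_le_of_emeasure_le) simp
  define g where "g x = enn2real (RN_deriv M P x)" for x
  have [measurable]: "g \<in> borel_measurable M"
    unfolding g_def by measurable
  have g_bounds: "AE x in M. 0 \<le> g x \<and> g x \<le> C"
    using RN_le by eventually_elim (use \<open>1 \<le> C\<close> in \<open>auto simp: g_def enn2real_leI\<close>)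
  have "AE x in M. RN_deriv M P x = ennreal (g x)"
    using RN_le by eventually_elim (auto simp: g_def ennreal_enn2real_if top_unique)
  then have "density M (\<lambda>x. ennreal (g x)) = density M (RN_deriv M P)"
    by (intro density_cong) (auto elim: eventually_mono)
  also have "\<dots> = P"
    using ac sets_eq by (rule M.density_RN_deriv)
  finally have P_density: "density M (\<lambda>x. ennreal (g x)) = P" .
  have entropy_density_eq: "entropy_density (exp 1) M P = (\<lambda>x. ln (g x))"
    unfolding entropy_density_def g_def by (auto simp: log_def)
  have "AE x in M. norm (g x *\<^sub>R ln (g x)) \<le> C\<^sup>2 + 1"
    using g_bounds by eventually_elim (simp add: abs_mult_ln_le)
  then have "integrable M (\<lambda>x. g x *\<^sub>R ln (g x))"
    by (rule M.integrable_const_bound) simp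
  then have integrable: "integrable P (\<lambda>x. ln (g x))"
    using integrable_density[of "\<lambda>x. ln (g x)" M g] P_density g_bounds by auto
  have "AE x in M. 0 < g x \<longrightarrow> ln (g x) \<le> ln C"
    using g_bounds by eventually_elim simp
  then have "AE x in P. ln (g x) \<le> ln C"
    by (subst P_density[symmetric]) (simp add: AE_density)
  then have "KL_divergence (exp 1) M P \<le> (\<integral>x. ln C \<partial>P)"
    unfolding KL_divergence_def entropy_density_eq
    by (intro integral_mono_AE integrable) simp_all
  then show ?thesis
    unfolding KLdiv_def using ac integrable entropy_density_eq P.prob_space by simp
qed

lemma KLdiv_mix_half_le_ln2:
  assumes "prob_space P" "prob_space Q" "sets Q = sets P"
  shows "KLdiv P (mix_half P Q) \<le> ereal (ln 2)"
  using prob_space_mix_half[OF assms] assms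
  by (intro KLdiv_le_ln_of_emeasure_le) (simp_all add: emeasure_le_2_mix_half)

lemma JSdiv_le_ln2:
  assumes "prob_space P" "prob_space Q" "sets Q = sets P"
  shows "JSdiv P Q \<le> ereal (ln 2)"
proof -
  have "KLdiv P (mix_half P Q) \<le> ereal (ln 2)"
    using assms by (rule KLdiv_mix_half_le_ln2)
  moreover have "KLdiv Q (mix_half P Q) \<le> ereal (ln 2)"
    using KLdiv_mix_half_le_ln2[of Q P] assms by (simp add: mix_half_commute)
  ultimately have "KLdiv P (mix_half P Q) + KLdiv Q (mix_half P Q) \<le> ereal (2 * ln 2)"
    using add_mono by fastforce
  moreover have "s / 2 \<le> ereal (ln 2)" if "s \<le> ereal (2 * ln 2)" for s :: ereal
    using that by (cases s) auto
  ultimately show ?thesis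
    unfolding JSdiv_def by blast
qed

lemma esqrt_le_sqrt: "x \<le> ereal r \<Longrightarrow> 0 \<le> r \<Longrightarrow> esqrt x \<le> ereal (sqrt r)"
  by (cases x) (auto simp: esqrt_def)

lemma sqrt_le_esqrt: "ereal r \<le> x \<Longrightarrow> ereal (sqrt r) \<le> esqrt x"
  by (cases x) (auto simp: esqrt_def)

lemma two_sqrt_mult_ln2_le:
  fixes c :: real
  assumes "0 \<le> c"
  shows "2 * sqrt (c * ln 2) \<le> sqrt (c * (8 * (ln 2)\<^sup>2))"
proof -
  have "4 * ln 2 * 1 \<le> 4 * ln 2 * (2 * ln (2::real))"
    using ln2_ge_two_thirds by (intro mult_left_mono) simp_all
  then have "c * (4 * ln 2) \<le> c * (8 * (ln 2)\<^sup>2)"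
    using assms by (intro mult_left_mono) (simp_all add: power2_eq_square)
  then have "sqrt (4 * (c * ln 2)) \<le> sqrt (c * (8 * (ln 2)\<^sup>2))"
    by (simp add: ac_simps)
  then show ?thesis
    by (simp add: real_sqrt_mult)
qed

lemma twice_mean_esqrt_le_mean_esqrt:
  fixes x y :: "nat \<Rightarrow> ereal"
  assumes "0 \<le> c"
    and x: "\<And>i. i < n \<Longrightarrow> x i \<le> ereal (ln 2)"
    and y: "\<And>i. i < n \<Longrightarrow> ereal (8 * (ln 2)\<^sup>2) \<le> y i"
  shows "ereal (2 / real n) * (\<Sum>i<n. esqrt (ereal c * x i))
       \<le> ereal (1 / real n) * (\<Sum>i<n. esqrt (ereal c * y i))"
proof (cases "n = 0")
  case False
  have x_term: "esqrt (ereal c * x i) \<le> ereal (sqrt (c * ln 2))" if "i < n" for i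
    using ereal_mult_left_mono[OF x[OF that], of "ereal c"] assms(1)
    by (intro esqrt_le_sqrt) simp_all
  have y_term: "ereal (sqrt (c * (8 * (ln 2)\<^sup>2))) \<le> esqrt (ereal c * y i)" if "i < n" for i
    using ereal_mult_left_mono[OF y[OF that], of "ereal c"] assms(1)
    by (intro sqrt_le_esqrt) simp
  have "ereal (2 / real n) * (\<Sum>i<n. esqrt (ereal c * x i))
      \<le> ereal (2 / real n) * (\<Sum>i<n. ereal (sqrt (c * ln 2)))"
    using x_term by (intro ereal_mult_left_mono sum_mono) auto
  also have "\<dots> = ereal (2 * sqrt (c * ln 2))"
    using False by (simp add: sum_ereal)
  also have "\<dots> \<le> ereal (sqrt (c * (8 * (ln 2)\<^sup>2)))"
    using two_sqrt_mult_ln2_le[OF assms(1)] by simp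
  also have "\<dots> = ereal (1 / real n) * (\<Sum>i<n. ereal (sqrt (c * (8 * (ln 2)\<^sup>2))))"
    using False by (simp add: sum_ereal)
  also have "\<dots> \<le> ereal (1 / real n) * (\<Sum>i<n. esqrt (ereal c * y i))"
    using y_term by (intro ereal_mult_left_mono sum_mono) auto
  finally show ?thesis .
qed simp

theorem proposition2:
  fixes MW :: "'w measure" and MZ :: "'z measure" and \<mu> :: "'z measure"
    and n :: nat
    and K :: "(nat \<Rightarrow> 'z) \<Rightarrow> 'w measure"
    and l :: "'w \<Rightarrow> 'z \<Rightarrow> real"
    and \<sigma> :: real
  defines "PS \<equiv> PiM {..<n} (\<lambda>_. \<mu>)"
  defines "PW \<equiv> PS \<bind> K"
  defines "PWZ \<equiv> (\<lambda>i. PS \<bind> (\<lambda>s. distr (K s) (MW \<Otimes>\<^sub>M MZ) (\<lambda>w. (w, s i))))"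
  assumes mu: "prob_space \<mu>" "sets \<mu> = sets MZ"
    and kernel: "K \<in> measurable (PiM {..<n} (\<lambda>_. MZ)) (prob_algebra MW)"
    and loss_nonneg: "\<forall>w\<in>space MW. \<forall>z\<in>space MZ. 0 \<le> l w z"
    and subg: "\<forall>i<n. subgaussian (mix_half (PWZ i) (PW \<Otimes>\<^sub>M \<mu>)) (\<lambda>(w, z). l w z) \<sigma>"
    and MI_large: "\<forall>i<n. KLdiv (PWZ i) (PW \<Otimes>\<^sub>M \<mu>) \<ge> ereal (8 * (ln 2)\<^sup>2)"
  shows "ereal (2 / real n) * (\<Sum>i<n. esqrt (ereal (2 * \<sigma>\<^sup>2) * JSdiv (PWZ i) (PW \<Otimes>\<^sub>M \<mu>)))
       \<le> ereal (1 / real n) * (\<Sum>i<n. esqrt (ereal (2 * \<sigma>\<^sup>2) * KLdiv (PWZ i) (PW \<Otimes>\<^sub>M \<mu>)))"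
proof -
  \<comment> \<open>The hypotheses on the loss are what make both sides generalization bounds;
    comparing the two bounds does not need them.\<close>
  have "prob_space PS"
    unfolding PS_def by (rule prob_space_PiM) (use mu in auto)
  moreover have "sets PS = sets (PiM {..<n} (\<lambda>_. MZ))"
    unfolding PS_def by (rule sets_PiM_cong) (use mu in auto)
  ultimately have PS: "PS \<in> space (prob_algebra (PiM {..<n} (\<lambda>_. MZ)))"
    by (simp add: space_prob_algebra)
  have PW_mu: "prob_space (PW \<Otimes>\<^sub>M \<mu>)" "sets (PW \<Otimes>\<^sub>M \<mu>) = sets (MW \<Otimes>\<^sub>M MZ)"
    unfolding PW_def using prob_space_bind'[OF PS kernel] sets_bind'[OF PS kernel] mu
    by (auto intro: prob_space_pair sets_pair_measure_cong)
  have PWZ: "prob_space (PWZ i)" "sets (PWZ i) = sets (MW \<Otimes>\<^sub>M MZ)" if "i < n" for i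
  proof -
    have "(\<lambda>s. distr (K s) (MW \<Otimes>\<^sub>M MZ) (\<lambda>w. (w, s i)))
        \<in> PiM {..<n} (\<lambda>_. MZ) \<rightarrow>\<^sub>M prob_algebra (MW \<Otimes>\<^sub>M MZ)"
      by (rule measurable_distr_prob_space2[OF kernel]) (measurable, use that in simp)
    then show "prob_space (PWZ i)" "sets (PWZ i) = sets (MW \<Otimes>\<^sub>M MZ)"
      unfolding PWZ_def using PS by (simp_all add: prob_space_bind' sets_bind')
  qed
  have "JSdiv (PWZ i) (PW \<Otimes>\<^sub>M \<mu>) \<le> ereal (ln 2)" if "i < n" for i
    using PWZ[OF that] PW_mu by (intro JSdiv_le_ln2) simp_all
  with MI_large show ?thesis
    by (intro twice_mean_esqrt_le_mean_esqrt) auto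
qed

end
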